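(* If $\mathcal{P}$ and $\mathcal{Q}$ are ranked finite posets each having a minimum and a maximum element, then $\mathcal{J}(\mathcal{P}\times\mathcal{Q},t)=\mathcal{J}(\mathcal{P},t)\,\mathcal{J}(\mathcal{Q},t)$.
   Context: $\mathcal{P}\times\mathcal{Q}$ carries the product order $(x_1,x_2)\le(y_1,y_2)$ iff $x_1\le y_1$ and $x_2\le y_2$, with rank $\mathrm{rk}(x_1,x_2)=\mathrm{rk}(x_1)+\mathrm{rk}(x_2)$. For a ranked finite poset $\mathcal{R}$ with minimum $\hat 0$ and maximum $\hat 1$, $\mathrm{rk}(\mathcal{R})=\mathrm{rk}(\hat 1)$; let $\delta_3(x,y,z)=1$ if $x=y=z$ and $0$ otherwise, let $J=J_\mathcal{R}$ be the unique integer-valued function on triples $x\le y\le z$ with $\sum_{x\le a\le y\le b\le z}J(a,y,b)=\delta_3(x,y,z)$ for all $x\le y\le z$, and $\mathcal{J}(\mathcal{R},t)=(-1)^{\mathrm{rk}(\mathcal{R})}\sum_{x\in\mathcal{R}}J(\hat 0,x,\hat 1)\,t^{\mathrm{rk}(\mathcal{R})-\mathrm{rk}(x)}$. *)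

theory Defs
  imports "HOL-Computational_Algebra.Polynomial"
begin

definition is_poset :: "'a set \<Rightarrow> ('a \<Rightarrow> 'a \<Rightarrow> bool) \<Rightarrow> bool" where
  "is_poset P le \<longleftrightarrow>
     (\<forall>x\<in>P. le x x) \<and>
     (\<forall>x\<in>P. \<forall>y\<in>P. le x y \<and> le y x \<longrightarrow> x = y) \<and>
     (\<forall>x\<in>P. \<forall>y\<in>P. \<forall>z\<in>P. le x y \<and> le y z \<longrightarrow> le x z)"

definition covers :: "'a set \<Rightarrow> ('a \<Rightarrow> 'a \<Rightarrow> bool) \<Rightarrow> 'a \<Rightarrow> 'a \<Rightarrow> bool" where
  "covers P le x y \<longleftrightarrow> x \<in> P \<and> y \<in> P \<and> le x y \<and> x \<noteq> y \<and>
     \<not> (\<exists>z\<in>P. le x z \<and> le z y \<and> z \<noteq> x \<and> z \<noteq> y)"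

definition pbot :: "'a set \<Rightarrow> ('a \<Rightarrow> 'a \<Rightarrow> bool) \<Rightarrow> 'a" where
  "pbot P le = (THE b. b \<in> P \<and> (\<forall>x\<in>P. le b x))"

definition ptop :: "'a set \<Rightarrow> ('a \<Rightarrow> 'a \<Rightarrow> bool) \<Rightarrow> 'a" where
  "ptop P le = (THE t. t \<in> P \<and> (\<forall>x\<in>P. le x t))"

definition ranked_bounded_poset ::
  "'a set \<Rightarrow> ('a \<Rightarrow> 'a \<Rightarrow> bool) \<Rightarrow> ('a \<Rightarrow> nat) \<Rightarrow> bool" where
  "ranked_bounded_poset P le rk \<longleftrightarrow>
     finite P \<and> is_poset P le \<and>
     (\<exists>b\<in>P. \<forall>x\<in>P. le b x) \<and> (\<exists>t\<in>P. \<forall>x\<in>P. le x t) \<and>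
     rk (pbot P le) = 0 \<and>
     (\<forall>x y. covers P le x y \<longrightarrow> rk y = rk x + 1)"

definition delta3 :: "'a \<Rightarrow> 'a \<Rightarrow> 'a \<Rightarrow> int" where
  "delta3 x y z = (if x = y \<and> y = z then 1 else 0)"

definition Jfun :: "'a set \<Rightarrow> ('a \<Rightarrow> 'a \<Rightarrow> bool) \<Rightarrow> 'a \<Rightarrow> 'a \<Rightarrow> 'a \<Rightarrow> int" where
  "Jfun P le = (THE J.
     (\<forall>x\<in>P. \<forall>y\<in>P. \<forall>z\<in>P. le x y \<and> le y z \<longrightarrow>
        (\<Sum>(a, b) \<in> {(a, b). a \<in> P \<and> b \<in> P \<and> le x a \<and> le a y \<and> le y b \<and> le b z}.
           J a y b) = delta3 x y z) \<and>
     (\<forall>x y z. \<not> (x \<in> P \<and> y \<in> P \<and> z \<in> P \<and> le x y \<and> le y z) \<longrightarrow> J x y z = 0))"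

definition Jpoly :: "'a set \<Rightarrow> ('a \<Rightarrow> 'a \<Rightarrow> bool) \<Rightarrow> ('a \<Rightarrow> nat) \<Rightarrow> int poly" where
  "Jpoly P le rk =
     (let b = pbot P le; t = ptop P le in
      (-1) ^ rk t * (\<Sum>x\<in>P. monom (Jfun P le b x t) (rk t - rk x)))"

definition prod_le :: "('a \<Rightarrow> 'a \<Rightarrow> bool) \<Rightarrow> ('b \<Rightarrow> 'b \<Rightarrow> bool) \<Rightarrow> 'a \<times> 'b \<Rightarrow> 'a \<times> 'b \<Rightarrow> bool" where
  "prod_le le1 le2 p q \<longleftrightarrow> le1 (fst p) (fst q) \<and> le2 (snd p) (snd q)"

definition prod_rk :: "('a \<Rightarrow> nat) \<Rightarrow> ('b \<Rightarrow> nat) \<Rightarrow> 'a \<times> 'b \<Rightarrow> nat" where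
  "prod_rk rk1 rk2 p = rk1 (fst p) + rk2 (snd p)"

end

theory Submission
  imports Defs
begin

(* J is uniquely determined by its defining identity: for fixed y, induct on the size of
   [x,y] \<times> [y,z], since the identity at (x,y,z) expresses J x y z through values on
   strictly smaller boxes. A solution exists, namely \<mu>(x,y) \<mu>(y,z) with \<mu> the Moebius
   function, because the defining sum then splits into two Moebius sums. In P \<times> Q, intervals
   are products of intervals and delta3 factors, so the product of the J-functions of P and Q
   solves the identity for P \<times> Q and hence is its J-function. As ranks add and every rank
   is at most the rank of the top element, the generating polynomial factors. *)

definition ivl :: "'a set \<Rightarrow> ('a \<Rightarrow> 'a \<Rightarrow> bool) \<Rightarrow> 'a \<Rightarrow> 'a \<Rightarrow> 'a set" where
  "ivl P le x y = {d \<in> P. le x d \<and> le d y}"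

lemma finite_ivl: "finite P \<Longrightarrow> finite (ivl P le x y)"
  unfolding ivl_def by simp

lemma ivl_self: "is_poset P le \<Longrightarrow> x \<in> P \<Longrightarrow> ivl P le x x = {x}"
  unfolding ivl_def is_poset_def by auto

lemma left_mem_ivl: "is_poset P le \<Longrightarrow> x \<in> P \<Longrightarrow> le x y \<Longrightarrow> x \<in> ivl P le x y"
  unfolding ivl_def is_poset_def by auto

lemma right_mem_ivl: "is_poset P le \<Longrightarrow> y \<in> P \<Longrightarrow> le x y \<Longrightarrow> y \<in> ivl P le x y"
  unfolding ivl_def is_poset_def by auto

lemma ivl_converse: "ivl P (\<lambda>u v. le v u) x y = ivl P le y x"
  unfolding ivl_def by auto

lemma ivl_times_ivl:
  "ivl P le x y \<times> ivl P le y z = {(a, b). a \<in> P \<and> b \<in> P \<and> le x a \<and> le a y \<and> le y b \<and> le b z}"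
  unfolding ivl_def by auto

lemma ivl_psubset_left:
  assumes "is_poset P le" "x \<in> P" "y \<in> P" "a \<in> ivl P le x y" "a \<noteq> x"
  shows "ivl P le a y \<subset> ivl P le x y"
  using assms unfolding ivl_def is_poset_def by blast

lemma ivl_psubset_right:
  assumes "is_poset P le" "x \<in> P" "y \<in> P" "b \<in> ivl P le x y" "b \<noteq> y"
  shows "ivl P le x b \<subset> ivl P le x y"
  using assms unfolding ivl_def is_poset_def by blast

lemma ivl_times_psubset:
  assumes "is_poset P le" "x \<in> P" "y \<in> P" "z \<in> P"
    and "(a, b) \<in> ivl P le x y \<times> ivl P le y z" "(a, b) \<noteq> (x, z)"
  shows "ivl P le a y \<times> ivl P le y b \<subset> ivl P le x y \<times> ivl P le y z"
  using assms unfolding ivl_def is_poset_def by blast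

function moebius :: "'a set \<Rightarrow> ('a \<Rightarrow> 'a \<Rightarrow> bool) \<Rightarrow> 'a \<Rightarrow> 'a \<Rightarrow> int" where
  "moebius P le x y =
     (if x = y then 1
      else if finite P \<and> is_poset P le \<and> x \<in> P \<and> y \<in> P
      then - (\<Sum>a \<in> ivl P le x y - {x}. moebius P le a y)
      else 0)"
  by pat_completeness auto
termination
proof (relation "measure (\<lambda>(P, le, x, y). card (ivl P le x y))", simp)
  fix P :: "'a set" and le x y a
  assume "\<not> x = y" and P: "finite P \<and> is_poset P le \<and> x \<in> P \<and> y \<in> P"
    and a: "a \<in> ivl P le x y - {x}"
  then have "ivl P le a y \<subset> ivl P le x y"
    by (intro ivl_psubset_left) auto
  then show "((P, le, a, y), P, le, x, y) \<in> measure (\<lambda>(P, le, x, y). card (ivl P le x y))"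
    using P by (simp add: finite_ivl psubset_card_mono)
qed

declare moebius.simps [simp del]

lemma sum_moebius:
  assumes "finite P" "is_poset P le" "x \<in> P" "y \<in> P" "le x y"
  shows "(\<Sum>a \<in> ivl P le x y. moebius P le a y) = (if x = y then 1 else 0)"
proof (cases "x = y")
  case True
  then show ?thesis using assms by (simp add: ivl_self moebius.simps)
next
  case False
  have "(\<Sum>a \<in> ivl P le x y. moebius P le a y)
      = moebius P le x y + (\<Sum>a \<in> ivl P le x y - {x}. moebius P le a y)"
    using sum.remove[OF finite_ivl[OF assms(1)] left_mem_ivl[OF assms(2,3,5)]] .
  also have "\<dots> = 0"
    using assms False by (subst moebius.simps) simp
  finally show ?thesis using False by simp
qed

definition is_Jfun :: "'a set \<Rightarrow> ('a \<Rightarrow> 'a \<Rightarrow> bool) \<Rightarrow> ('a \<Rightarrow> 'a \<Rightarrow> 'a \<Rightarrow> int) \<Rightarrow> bool" where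
  "is_Jfun P le J \<longleftrightarrow>
     (\<forall>x\<in>P. \<forall>y\<in>P. \<forall>z\<in>P. le x y \<and> le y z \<longrightarrow>
        (\<Sum>(a, b) \<in> ivl P le x y \<times> ivl P le y z. J a y b) = delta3 x y z) \<and>
     (\<forall>x y z. \<not> (x \<in> P \<and> y \<in> P \<and> z \<in> P \<and> le x y \<and> le y z) \<longrightarrow> J x y z = 0)"

lemma is_Jfun_sum:
  "is_Jfun P le J \<Longrightarrow> x \<in> P \<Longrightarrow> y \<in> P \<Longrightarrow> z \<in> P \<Longrightarrow> le x y \<Longrightarrow> le y z \<Longrightarrow>
    (\<Sum>(a, b) \<in> ivl P le x y \<times> ivl P le y z. J a y b) = delta3 x y z"
  unfolding is_Jfun_def by blast

lemma is_Jfun_outside: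
  "is_Jfun P le J \<Longrightarrow> \<not> (x \<in> P \<and> y \<in> P \<and> z \<in> P \<and> le x y \<and> le y z) \<Longrightarrow> J x y z = 0"
  unfolding is_Jfun_def by blast

lemma Jfun_eq_The: "Jfun P le = (THE J. is_Jfun P le J)"
  unfolding Jfun_def is_Jfun_def ivl_times_ivl ..

lemma is_Jfun_unique:
  assumes fin: "finite P" and po: "is_poset P le"
    and J1: "is_Jfun P le J1" and J2: "is_Jfun P le J2"
  shows "J1 = J2"
proof -
  have "J1 x y z = J2 x y z" if "x \<in> P" "y \<in> P" "z \<in> P" "le x y" "le y z" for x y z
    using that
  proof (induction "card (ivl P le x y \<times> ivl P le y z)" arbitrary: x z rule: less_induct)
    case less
    define S where "S = ivl P le x y \<times> ivl P le y z"
    have finS: "finite S" unfolding S_def using fin by (simp add: finite_ivl)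
    have xz: "(x, z) \<in> S"
      unfolding S_def using po less.prems by (simp add: left_mem_ivl right_mem_ivl)
    have "J1 a y b = J2 a y b" if ab: "(a, b) \<in> S - {(x, z)}" for a b
    proof (rule less.hyps)
      show "card (ivl P le a y \<times> ivl P le y b) < card (ivl P le x y \<times> ivl P le y z)"
        using ab finS ivl_times_psubset[OF po less.prems(1-3)] unfolding S_def
        by (simp add: psubset_card_mono)
    qed (use ab less.prems in \<open>auto simp: S_def ivl_def\<close>)
    then have rest:
      "(\<Sum>(a, b) \<in> S - {(x, z)}. J1 a y b) = (\<Sum>(a, b) \<in> S - {(x, z)}. J2 a y b)"
      by (intro sum.cong) auto
    have "(\<Sum>(a, b) \<in> S. J1 a y b) = (\<Sum>(a, b) \<in> S. J2 a y b)"
      using is_Jfun_sum[OF J1] is_Jfun_sum[OF J2] less.prems unfolding S_def by simp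
    then show ?case
      using rest sum.remove[OF finS xz, of "\<lambda>(a, b). J1 a y b"]
        sum.remove[OF finS xz, of "\<lambda>(a, b). J2 a y b"] by simp
  qed
  then show ?thesis
    using is_Jfun_outside[OF J1] is_Jfun_outside[OF J2] by (intro ext) metis
qed

(* The Moebius function of the converse order at (z, y) is \<mu>(y, z). *)
definition Jmoebius :: "'a set \<Rightarrow> ('a \<Rightarrow> 'a \<Rightarrow> bool) \<Rightarrow> 'a \<Rightarrow> 'a \<Rightarrow> 'a \<Rightarrow> int" where
  "Jmoebius P le x y z =
     (if x \<in> P \<and> y \<in> P \<and> z \<in> P \<and> le x y \<and> le y z
      then moebius P le x y * moebius P (\<lambda>u v. le v u) z y else 0)"

lemma is_poset_converse: "is_poset P le \<Longrightarrow> is_poset P (\<lambda>u v. le v u)"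
  unfolding is_poset_def by blast

lemma is_Jfun_Jmoebius:
  assumes fin: "finite P" and po: "is_poset P le"
  shows "is_Jfun P le (Jmoebius P le)"
  unfolding is_Jfun_def
proof (intro conjI ballI impI allI)
  fix x y z assume P: "x \<in> P" "y \<in> P" "z \<in> P" and le: "le x y \<and> le y z"
  have "(\<Sum>(a, b) \<in> ivl P le x y \<times> ivl P le y z. Jmoebius P le a y b)
      = (\<Sum>(a, b) \<in> ivl P le x y \<times> ivl P le y z. moebius P le a y * moebius P (\<lambda>u v. le v u) b y)"
    by (intro sum.cong) (auto simp: Jmoebius_def ivl_def \<open>y \<in> P\<close>)
  also have "\<dots> = (\<Sum>a \<in> ivl P le x y. moebius P le a y)
                  * (\<Sum>b \<in> ivl P (\<lambda>u v. le v u) z y. moebius P (\<lambda>u v. le v u) b y)"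
    by (simp add: sum_product sum.cartesian_product ivl_converse[of P le z y])
  also have "\<dots> = delta3 x y z"
    using P le by (simp add: sum_moebius fin po is_poset_converse delta3_def)
  finally show "(\<Sum>(a, b) \<in> ivl P le x y \<times> ivl P le y z. Jmoebius P le a y b) = delta3 x y z" .
qed (auto simp: Jmoebius_def)

lemma Jfun_eqI:
  assumes "finite P" "is_poset P le" "is_Jfun P le J"
  shows "Jfun P le = J"
  unfolding Jfun_eq_The
proof (rule the_equality)
  fix J' assume "is_Jfun P le J'"
  then show "J' = J" by (rule is_Jfun_unique[OF assms(1,2) _ assms(3)])
qed (fact assms(3))

lemma is_Jfun_Jfun:
  assumes "finite P" "is_poset P le"
  shows "is_Jfun P le (Jfun P le)"
  using Jfun_eqI[OF assms is_Jfun_Jmoebius[OF assms]] is_Jfun_Jmoebius[OF assms] by simp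

lemma is_poset_prod:
  assumes "is_poset P leP" "is_poset Q leQ"
  shows "is_poset (P \<times> Q) (prod_le leP leQ)"
  unfolding is_poset_def
proof (intro conjI ballI impI)
  fix x assume "x \<in> P \<times> Q"
  then show "prod_le leP leQ x x"
    using assms unfolding is_poset_def prod_le_def by (auto simp: mem_Times_iff)
next
  fix x y assume "x \<in> P \<times> Q" "y \<in> P \<times> Q" "prod_le leP leQ x y \<and> prod_le leP leQ y x"
  then show "x = y"
    using assms unfolding is_poset_def prod_le_def by (metis mem_Times_iff prod_eq_iff)
next
  fix x y z assume "x \<in> P \<times> Q" "y \<in> P \<times> Q" "z \<in> P \<times> Q"
    "prod_le leP leQ x y \<and> prod_le leP leQ y z"
  then show "prod_le leP leQ x z"
    using assms unfolding is_poset_def prod_le_def by (metis mem_Times_iff)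
qed

lemma ivl_prod:
  "ivl (P \<times> Q) (prod_le leP leQ) x y = ivl P leP (fst x) (fst y) \<times> ivl Q leQ (snd x) (snd y)"
  unfolding ivl_def prod_le_def by auto

lemma delta3_prod: "delta3 x y z = delta3 (fst x) (fst y) (fst z) * delta3 (snd x) (snd y) (snd z)"
  unfolding delta3_def by (auto simp: prod_eq_iff)

lemma sum_pairs_times:
  fixes f :: "'a \<Rightarrow> 'b \<Rightarrow> 'r::comm_semiring_1" and g :: "'c \<Rightarrow> 'd \<Rightarrow> 'r"
  shows "(\<Sum>(a, b) \<in> (A1 \<times> A2) \<times> (B1 \<times> B2). f (fst a) (fst b) * g (snd a) (snd b))
       = (\<Sum>(a, b) \<in> A1 \<times> B1. f a b) * (\<Sum>(a, b) \<in> A2 \<times> B2. g a b)"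
proof -
  have "(\<Sum>(a, b) \<in> (A1 \<times> A2) \<times> (B1 \<times> B2). f (fst a) (fst b) * g (snd a) (snd b))
      = (\<Sum>a1\<in>A1. \<Sum>a2\<in>A2. \<Sum>b1\<in>B1. \<Sum>b2\<in>B2. f a1 b1 * g a2 b2)"
    by (simp add: sum.cartesian_product')
  also have "\<dots> = (\<Sum>a1\<in>A1. \<Sum>b1\<in>B1. \<Sum>a2\<in>A2. \<Sum>b2\<in>B2. f a1 b1 * g a2 b2)"
    by (rule sum.cong[OF refl], rule sum.swap)
  also have "\<dots> = (\<Sum>(a, b) \<in> A1 \<times> B1. f a b) * (\<Sum>(a, b) \<in> A2 \<times> B2. g a b)"
    unfolding sum_product by (simp add: sum.cartesian_product')
  finally show ?thesis .
qed

lemma Jfun_prod: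
  assumes finP: "finite P" and poP: "is_poset P leP" and finQ: "finite Q" and poQ: "is_poset Q leQ"
  shows "Jfun (P \<times> Q) (prod_le leP leQ)
    = (\<lambda>x y z. Jfun P leP (fst x) (fst y) (fst z) * Jfun Q leQ (snd x) (snd y) (snd z))"
proof (rule Jfun_eqI)
  have JP: "is_Jfun P leP (Jfun P leP)" and JQ: "is_Jfun Q leQ (Jfun Q leQ)"
    using finP poP finQ poQ by (simp_all add: is_Jfun_Jfun)
  show "is_Jfun (P \<times> Q) (prod_le leP leQ)
    (\<lambda>x y z. Jfun P leP (fst x) (fst y) (fst z) * Jfun Q leQ (snd x) (snd y) (snd z))"
    unfolding is_Jfun_def
  proof (intro conjI ballI impI allI)
    fix x y z assume mem: "x \<in> P \<times> Q" "y \<in> P \<times> Q" "z \<in> P \<times> Q"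
      and le: "prod_le leP leQ x y \<and> prod_le leP leQ y z"
    have "(\<Sum>(a, b) \<in> ivl P leP (fst x) (fst y) \<times> ivl P leP (fst y) (fst z).
          Jfun P leP a (fst y) b) = delta3 (fst x) (fst y) (fst z)"
      using is_Jfun_sum[OF JP] mem le unfolding prod_le_def by (simp add: mem_Times_iff)
    moreover have "(\<Sum>(a, b) \<in> ivl Q leQ (snd x) (snd y) \<times> ivl Q leQ (snd y) (snd z).
          Jfun Q leQ a (snd y) b) = delta3 (snd x) (snd y) (snd z)"
      using is_Jfun_sum[OF JQ] mem le unfolding prod_le_def by (simp add: mem_Times_iff)
    ultimately show "(\<Sum>(a, b) \<in> ivl (P \<times> Q) (prod_le leP leQ) x y
          \<times> ivl (P \<times> Q) (prod_le leP leQ) y z.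
        Jfun P leP (fst a) (fst y) (fst b) * Jfun Q leQ (snd a) (snd y) (snd b)) = delta3 x y z"
      unfolding ivl_prod delta3_prod[of x y z]
        sum_pairs_times[where f = "\<lambda>a b. Jfun P leP a (fst y) b"
          and g = "\<lambda>a b. Jfun Q leQ a (snd y) b"]
      by simp
  next
    fix x y z assume outside: "\<not> (x \<in> P \<times> Q \<and> y \<in> P \<times> Q \<and> z \<in> P \<times> Q
      \<and> prod_le leP leQ x y \<and> prod_le leP leQ y z)"
    consider
      "\<not> (fst x \<in> P \<and> fst y \<in> P \<and> fst z \<in> P \<and> leP (fst x) (fst y) \<and> leP (fst y) (fst z))"
    | "\<not> (snd x \<in> Q \<and> snd y \<in> Q \<and> snd z \<in> Q \<and> leQ (snd x) (snd y) \<and> leQ (snd y) (snd z))"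
      using outside unfolding prod_le_def mem_Times_iff by auto
    then show "Jfun P leP (fst x) (fst y) (fst z) * Jfun Q leQ (snd x) (snd y) (snd z) = 0"
    proof cases
      case 1
      then show ?thesis by (simp add: is_Jfun_outside[OF JP 1])
    next
      case 2
      then show ?thesis by (simp add: is_Jfun_outside[OF JQ 2])
    qed
  qed
qed (simp_all add: finP finQ is_poset_prod[OF poP poQ])

lemma ex_covers_in_ivl:
  assumes fin: "finite P" and po: "is_poset P le"
    and x: "x \<in> P" and y: "y \<in> P" "le x y" and "x \<noteq> y"
  shows "\<exists>z \<in> ivl P le x y. covers P le x z"
proof -
  define S where "S = ivl P le x y - {x}"
  have "y \<in> S" using assms by (simp add: S_def right_mem_ivl)
  then obtain z where zS: "z \<in> S"
    and zmin: "\<And>w. w \<in> S \<Longrightarrow> card (ivl P le x z) \<le> card (ivl P le x w)"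
    using ex_has_least_nat[of "\<lambda>z. z \<in> S" y "\<lambda>z. card (ivl P le x z)"] by blast
  have z: "z \<in> P" "le x z" "le z y" "z \<noteq> x" using zS by (auto simp: S_def ivl_def)
  have "\<not> (le x w \<and> le w z \<and> w \<noteq> x \<and> w \<noteq> z)" if w: "w \<in> P" for w
  proof
    assume between: "le x w \<and> le w z \<and> w \<noteq> x \<and> w \<noteq> z"
    then have "w \<in> S" using po w z y unfolding S_def ivl_def is_poset_def by blast
    moreover have "ivl P le x w \<subset> ivl P le x z"
      using between w z by (intro ivl_psubset_right[OF po x]) (auto simp: ivl_def)
    then have "card (ivl P le x w) < card (ivl P le x z)"
      by (simp add: fin finite_ivl psubset_card_mono)
    ultimately show False using zmin by fastforce
  qed
  then have "covers P le x z" using x z unfolding covers_def by blast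
  then show ?thesis using zS unfolding S_def by blast
qed

lemma ranked_rank_mono:
  assumes ranked: "ranked_bounded_poset P le rk"
  shows "x \<in> P \<Longrightarrow> y \<in> P \<Longrightarrow> le x y \<Longrightarrow> rk x \<le> rk y"
proof (induction "card (ivl P le x y)" arbitrary: x rule: less_induct)
  case less
  have fin: "finite P" and po: "is_poset P le"
    and cov: "\<And>u v. covers P le u v \<Longrightarrow> rk v = rk u + 1"
    using ranked unfolding ranked_bounded_poset_def by auto
  show ?case
  proof (cases "x = y")
    case False
    then obtain z where z: "z \<in> ivl P le x y" and xz: "covers P le x z"
      using ex_covers_in_ivl[OF fin po less.prems] by blast
    have "ivl P le z y \<subset> ivl P le x y"
      using xz z less.prems by (intro ivl_psubset_left[OF po]) (auto simp: covers_def)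
    then have "card (ivl P le z y) < card (ivl P le x y)"
      by (simp add: fin finite_ivl psubset_card_mono)
    then have "rk z \<le> rk y" using less.hyps less.prems z by (auto simp: ivl_def)
    then show ?thesis using cov[OF xz] by simp
  qed simp
qed

lemma pbot_eqI: "is_poset P le \<Longrightarrow> b \<in> P \<Longrightarrow> \<forall>x\<in>P. le b x \<Longrightarrow> pbot P le = b"
  unfolding pbot_def is_poset_def by (rule the_equality) blast+

lemma ptop_eqI: "is_poset P le \<Longrightarrow> t \<in> P \<Longrightarrow> \<forall>x\<in>P. le x t \<Longrightarrow> ptop P le = t"
  unfolding ptop_def is_poset_def by (rule the_equality) blast+

lemma pbot_prod:
  assumes "is_poset P leP" "is_poset Q leQ" "\<exists>b\<in>P. \<forall>x\<in>P. leP b x" "\<exists>b\<in>Q. \<forall>x\<in>Q. leQ b x"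
  shows "pbot (P \<times> Q) (prod_le leP leQ) = (pbot P leP, pbot Q leQ)"
  using assms pbot_eqI[OF is_poset_prod[OF assms(1,2)]] pbot_eqI[of P leP] pbot_eqI[of Q leQ]
  by (force simp: prod_le_def)

lemma ptop_prod:
  assumes "is_poset P leP" "is_poset Q leQ" "\<exists>t\<in>P. \<forall>x\<in>P. leP x t" "\<exists>t\<in>Q. \<forall>x\<in>Q. leQ x t"
  shows "ptop (P \<times> Q) (prod_le leP leQ) = (ptop P leP, ptop Q leQ)"
  using assms ptop_eqI[OF is_poset_prod[OF assms(1,2)]] ptop_eqI[of P leP] ptop_eqI[of Q leQ]
  by (force simp: prod_le_def)

lemma ranked_rank_le_ptop:
  assumes ranked: "ranked_bounded_poset P le rk" and "x \<in> P"
  shows "rk x \<le> rk (ptop P le)"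
proof -
  obtain t where "t \<in> P" "\<forall>x\<in>P. le x t" and "is_poset P le"
    using ranked unfolding ranked_bounded_poset_def by blast
  then show ?thesis using ranked_rank_mono[OF ranked] \<open>x \<in> P\<close> ptop_eqI by metis
qed

lemma sum_monom_times:
  fixes f :: "'a \<Rightarrow> 'r::comm_semiring_1" and g :: "'b \<Rightarrow> 'r"
  assumes "\<forall>x\<in>A. r x \<le> m" and "\<forall>y\<in>B. s y \<le> n"
  shows "(\<Sum>(x, y) \<in> A \<times> B. monom (f x * g y) (m + n - (r x + s y)))
       = (\<Sum>x\<in>A. monom (f x) (m - r x)) * (\<Sum>y\<in>B. monom (g y) (n - s y))"
  using assms by (auto simp: sum_product sum.cartesian_product mult_monom intro!: sum.cong)

theorem proposition6p5:
  fixes P :: "'a set" and leP :: "'a \<Rightarrow> 'a \<Rightarrow> bool" and rkP :: "'a \<Rightarrow> nat"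
    and Q :: "'b set" and leQ :: "'b \<Rightarrow> 'b \<Rightarrow> bool" and rkQ :: "'b \<Rightarrow> nat"
  assumes "ranked_bounded_poset P leP rkP"
    and "ranked_bounded_poset Q leQ rkQ"
  shows "Jpoly (P \<times> Q) (prod_le leP leQ) (prod_rk rkP rkQ) = Jpoly P leP rkP * Jpoly Q leQ rkQ"
proof -
  note P = assms(1)[unfolded ranked_bounded_poset_def]
  note Q = assms(2)[unfolded ranked_bounded_poset_def]
  have "Jpoly (P \<times> Q) (prod_le leP leQ) (prod_rk rkP rkQ)
      = (-1) ^ (rkP (ptop P leP) + rkQ (ptop Q leQ)) *
        (\<Sum>(x, y) \<in> P \<times> Q.
           monom (Jfun P leP (pbot P leP) x (ptop P leP) * Jfun Q leQ (pbot Q leQ) y (ptop Q leQ))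
             (rkP (ptop P leP) + rkQ (ptop Q leQ) - (rkP x + rkQ y)))"
    using P Q unfolding Jpoly_def Let_def
    by (simp add: pbot_prod ptop_prod Jfun_prod prod_rk_def split_def)
  also have "\<dots> = Jpoly P leP rkP * Jpoly Q leQ rkQ"
    unfolding Jpoly_def Let_def
    by (simp add: sum_monom_times ranked_rank_le_ptop assms power_add mult_ac)
  finally show ?thesis .
qed

end
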